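(* Let $a\in\mathbb{R}$ and let the polynomials $H_m(z)$ be defined by the generating function \[ \sum_{m=0}^{\infty}H_m(z)t^m=\frac{1}{1+t+at^2+zt^3}. \] If $-1\le a\le 1/3$, then for every $m$ the zeros of $H_m(z)$ lie in the real interval \[ I_a=\left(-\infty,\ \frac{-2+9a-2\sqrt{(1-3a)^3}}{27}\right], \] and $\bigcup_{m=0}^{\infty}\mathcal{Z}(H_m)$ is dense in $I_a$.
   Context: $\mathcal{Z}(H_m)$ denotes the set of zeros of $H_m(z)$. Convention: the zeros of the constant zero polynomial are considered real (and the statement about their location is vacuous). *)

theory Defs
  imports "HOL-Analysis.Analysis" "HOL-Computational_Algebra.Polynomial"
begin

text \<open>H a m is the coefficient of t^m in 1/(1 + t + a t^2 + z t^3), as a real polynomial in z.\<close>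
fun H :: "real \<Rightarrow> nat \<Rightarrow> real poly" where
  "H a 0 = 1"
| "H a (Suc 0) = -1"
| "H a (Suc (Suc 0)) = [:1 - a:]"
| "H a (Suc (Suc (Suc n))) =
     - H a (Suc (Suc n)) - smult a (H a (Suc n)) - [:0, 1:] * H a n"

definition Hzeros :: "real \<Rightarrow> nat \<Rightarrow> complex set" where
  "Hzeros a m = {z. poly (map_poly complex_of_real (H a m)) z = 0}"

definition Ia :: "real \<Rightarrow> real set" where
  "Ia a = {.. (-2 + 9 * a - 2 * sqrt ((1 - 3 * a) ^ 3)) / 27}"

end

theory Submission
  imports Defs "HOL-Real_Asymp.Real_Asymp"
begin

text \<open>Substitute \<open>z = -l (l\<^sup>2 + l + a)\<close>. Then \<open>l\<close> is a root of \<open>x\<^sup>3 + x\<^sup>2 + a x + z\<close>, and for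
  \<open>l > l\<^sub>0 = (2 \<surd>(1 - 3a) - 1)/3\<close> the other two roots are \<open>r e\<^sup>\<plusminus>\<^sup>i\<^sup>\<theta>\<close> with \<open>|l| < r\<close>. Partial
  fractions give \<open>H\<^sub>m(z) = l\<^sup>m\<^sup>+\<^sup>2/\<rho>\<^sup>2 + r\<^sup>m\<^sup>+\<^sup>2 sin((m+2)\<theta> - \<phi>)/(\<rho>\<eta>)\<close>, and the oscillating term
  dominates. As \<open>l\<close> runs from \<open>l\<^sub>0\<close> to \<open>\<infinity>\<close>, \<open>z\<close> decreases from the endpoint of \<open>I\<^sub>a\<close> to \<open>-\<infinity>\<close>
  while the phase \<open>(m+2)\<theta> - \<phi>\<close> falls from about \<open>(m+1)\<pi>\<close> to about \<open>2(m+2)\<pi>/3 - 5\<pi>/6\<close>,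
  so \<open>H\<^sub>m\<close> changes sign \<open>\<lfloor>m/3\<rfloor>\<close> times on \<open>I\<^sub>a\<close>; as \<open>deg H\<^sub>m \<le> \<lfloor>m/3\<rfloor>\<close>, these are all its zeros.
  Since \<open>\<theta>\<close> is strictly decreasing in \<open>l\<close>, for large \<open>m\<close> the phase sweeps more than \<open>3\<pi>\<close> over any
  short \<open>l\<close>-interval, which forces a zero there: hence density.\<close>

lemma degree_H_le: "degree (H a m) \<le> m div 3"
proof (induction a m rule: H.induct)
  case (4 a n)
  have "degree (- H a (Suc (Suc n)) - smult a (H a (Suc n)))
      \<le> max (degree (H a (Suc (Suc n)))) (degree (smult a (H a (Suc n))))"
    by (metis degree_diff_le_max degree_minus)
  also have "\<dots> \<le> n div 3 + 1"
    using 4 by (auto intro: order.trans[OF degree_smult_le])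
  finally have d1: "degree (- H a (Suc (Suc n)) - smult a (H a (Suc n))) \<le> n div 3 + 1" .
  have d2: "degree ([:0, 1:] * H a n) \<le> n div 3 + 1"
    using degree_mult_le[of "[:0,1:]" "H a n"] 4(3) by simp
  have "degree (- H a (Suc (Suc n)) - smult a (H a (Suc n)) - [:0, 1:] * H a n)
     \<le> max (degree (- H a (Suc (Suc n)) - smult a (H a (Suc n)))) (degree ([:0, 1:] * H a n))"
    by (rule degree_diff_le_max)
  also have "\<dots> \<le> Suc (Suc (Suc n)) div 3" using d1 d2 by auto
  finally show ?case by simp
qed auto

lemma power_mult_sin_recurrence:
  fixes r \<theta> \<phi> :: real
  shows "r^(n+2) * sin ((real n + 2) * \<theta> - \<phi>)
       = 2 * (r * cos \<theta>) * (r^(n+1) * sin ((real n + 1) * \<theta> - \<phi>)) - r^2 * (r^n * sin (real n * \<theta> - \<phi>))"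
proof -
  define x where "x = (real n + 1) * \<theta> - \<phi>"
  have shift: "(real n + 2) * \<theta> - \<phi> = x + \<theta>" "real n * \<theta> - \<phi> = x - \<theta>"
    unfolding x_def by (simp_all add: algebra_simps)
  have sin_sum: "sin (x + \<theta>) = 2 * sin x * cos \<theta> - sin (x - \<theta>)"
    by (simp add: sin_add sin_diff)
  have pow: "r^(n+2) = r * r * r^n" "r^(n+1) = r * r^n"
    by (simp_all add: power_add)
  show ?thesis
    unfolding shift x_def[symmetric] sin_sum pow power2_eq_square by (simp add: algebra_simps)
qed

lemma poly_H_eq_recurrence:
  fixes K :: "nat \<Rightarrow> real"
  assumes "K 0 = 0" and "K 1 = 0" and "K 2 = 1"
    and rec: "\<And>n. K (Suc (Suc (Suc n))) = - K (Suc (Suc n)) - a * K (Suc n) - z * K n"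
  shows "poly (H a m) z = K (m + 2)"
proof (induction rule: H.induct[of "\<lambda>_ m. poly (H a m) z = K (m + 2)" a m])
  case (4 _ n)
  then show ?case using rec[of "Suc (Suc n)"] by (simp add: numeral_eq_Suc algebra_simps)
qed (use assms rec[of 0] rec[of 1] in \<open>simp_all add: numeral_eq_Suc\<close>)

text \<open>Here \<open>1 + t + a t\<^sup>2 + z t\<^sup>3 = (1 - l t) (1 - r e\<^sup>i\<^sup>\<theta> t) (1 - r e\<^sup>-\<^sup>i\<^sup>\<theta> t)\<close>, and
  \<open>\<rho> e\<^sup>i\<^sup>\<phi> = -(1 + 3l)/2 + i \<eta>\<close> determines the partial fraction coefficients. Both summands satisfy
  the recurrence of \<open>H\<close>, so only the initial values need checking.\<close>
lemma poly_H_trig_formula: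
  fixes a l r \<rho> \<eta> \<theta> \<phi> :: real
  assumes r_sq: "r^2 = l^2 + l + a" and r_cos: "r * cos \<theta> = -(1 + l)/2" and r_sin: "r * sin \<theta> = \<eta>"
    and \<rho>_sq: "\<rho>^2 = 3*l^2 + 2*l + a" and \<rho>_pos: "\<rho> > 0" and \<eta>_pos: "\<eta> > 0"
    and \<rho>_cos: "\<rho> * cos \<phi> = -(1 + 3*l)/2" and \<rho>_sin: "\<rho> * sin \<phi> = \<eta>"
  shows "poly (H a m) (-l * (l^2 + l + a)) = l^(m+2)/\<rho>^2 + r^(m+2) * sin ((real m + 2) * \<theta> - \<phi>)/(\<rho> * \<eta>)"
proof -
  define S where "S n = r^n * sin (real n * \<theta> - \<phi>)" for n
  define K where "K n = l^n/\<rho>^2 + S n/(\<rho> * \<eta>)" for n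
  define z where "z = -l * (l^2 + l + a)"
  have S_rec: "S (Suc (Suc n)) = -(1 + l) * S (Suc n) - (l^2 + l + a) * S n" for n
    using power_mult_sin_recurrence[of r n \<theta> \<phi>] unfolding S_def r_cos r_sq by (simp add: add.commute)
  have S0: "S 0 = -\<eta>/\<rho>" using \<rho>_sin \<rho>_pos unfolding S_def by (simp add: field_simps)
  have S1: "S 1 = -l * \<eta>/\<rho>"
  proof -
    have "\<rho> * S 1 = \<eta> * (\<rho> * cos \<phi>) - r * cos \<theta> * (\<rho> * sin \<phi>)"
      using r_sin unfolding S_def by (simp add: sin_diff algebra_simps)
    also have "\<dots> = -l * \<eta>" unfolding \<rho>_cos r_cos \<rho>_sin by (simp add: field_simps)
    finally show ?thesis using \<rho>_pos by (simp add: field_simps)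
  qed
  have K_init: "K 0 = 0" "K 1 = 0" "K 2 = 1"
  proof -
    have S2: "S 2 = -(1 + l) * S 1 - (l^2 + l + a) * S 0"
      using S_rec[of 0] by (simp add: numeral_2_eq_2)
    have "\<rho> * S 2 = -(1 + l) * (\<rho> * S 1) - (l^2 + l + a) * (\<rho> * S 0)"
      unfolding S2 by (simp add: algebra_simps)
    also have "\<dots> = \<eta> * (2*l^2 + 2*l + a)"
      using \<rho>_pos by (simp add: S0 S1 S1[unfolded One_nat_def] algebra_simps power2_eq_square)
    finally have "S 2/(\<rho> * \<eta>) = (2*l^2 + 2*l + a)/\<rho>^2"
      using \<rho>_pos \<eta>_pos by (simp add: field_simps power2_eq_square)
    then have "K 2 = (l^2 + (2*l^2 + 2*l + a))/\<rho>^2" unfolding K_def by (simp add: add_divide_distrib)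
    also have "l^2 + (2*l^2 + 2*l + a) = \<rho>^2" using \<rho>_sq by simp
    finally show "K 2 = 1" using \<rho>_pos by simp
  qed (use \<rho>_pos \<eta>_pos in \<open>simp_all add: K_def S0 S1 S1[unfolded One_nat_def] field_simps power2_eq_square\<close>)
  have K_rec: "K (Suc (Suc (Suc n))) = - K (Suc (Suc n)) - a * K (Suc n) - z * K n" for n
  proof -
    have l_rec: "l^(Suc (Suc (Suc n))) = - (l^(Suc (Suc n))) - a * l^(Suc n) - z * l^n"
      unfolding z_def by (simp add: power2_eq_square algebra_simps)
    have S_rec3: "S (Suc (Suc (Suc n))) = - S (Suc (Suc n)) - a * S (Suc n) - z * S n"
      unfolding S_rec[of "Suc n"] S_rec[of n] z_def by (simp add: power2_eq_square field_simps)
    show ?thesis unfolding K_def l_rec S_rec3 using \<rho>_pos \<eta>_pos by (simp add: field_simps)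
  qed
  show ?thesis
    using poly_H_eq_recurrence[OF K_init K_rec] unfolding K_def S_def z_def by (simp add: add.commute)
qed

lemma arccos_polar:
  fixes q d x :: real
  assumes "q > 0" and "4*q = d + x^2" and "d \<ge> 0"
  shows "sqrt q * cos (arccos (-x/(2 * sqrt q))) = -x/2"
    and "sqrt q * sin (arccos (-x/(2 * sqrt q))) = sqrt d/2"
proof -
  have "(sqrt q)^2 = q" using assms(1) by simp
  then have frac_sq: "(-x/(2 * sqrt q))^2 = x^2/(4*q)"
    by (simp add: power_divide power_mult_distrib)
  also have "\<dots> \<le> 1" using assms by simp
  finally have bounded: "-1 \<le> -x/(2 * sqrt q) \<and> -x/(2 * sqrt q) \<le> 1"
    unfolding abs_square_le_1 abs_le_iff by linarith
  then show "sqrt q * cos (arccos (-x/(2 * sqrt q))) = -x/2" using assms(1) by simp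
  have "1 - (-x/(2 * sqrt q))^2 = d/(4*q)" unfolding frac_sq using assms(1,2) by (simp add: field_simps)
  then have "sqrt q * sin (arccos (-x/(2 * sqrt q))) = sqrt q * sqrt (d/(4*q))"
    using bounded by (simp add: sin_arccos)
  also have "\<dots> = sqrt (q * (d/(4*q)))" by (simp only: real_sqrt_mult)
  also have "\<dots> = sqrt d/2" using assms(1) by (simp add: real_sqrt_divide)
  finally show "sqrt q * sin (arccos (-x/(2 * sqrt q))) = sqrt d/2" .
qed

lemma sin_half_odd_pi: "sin ((real j + 1/2) * pi) = (-1)^j"
proof -
  have "(real j + 1/2) * pi = real j * pi + pi/2" by (simp add: algebra_simps)
  then show ?thesis by (simp add: sin_add)
qed

lemma mult_neg_of_alternating_signs:
  fixes x y :: real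
  assumes "0 < x * (-1)^Suc n" and "0 < y * (-1)^n"
  shows "x * y < 0"
proof -
  have "(x * (-1)^Suc n) * (y * (-1)^n) = - (x * y)"
    by (simp add: algebra_simps flip: power_add mult_2)
  then show ?thesis using mult_pos_pos[OF assms] by linarith
qed

lemma sign_change_imp_zero:
  fixes g :: "real \<Rightarrow> real"
  assumes cont: "continuous_on {x..y} g" and "x \<le> y" and sign: "g x * g y < 0"
  shows "\<exists>z. x < z \<and> z < y \<and> g z = 0"
proof -
  have "\<exists>z. x \<le> z \<and> z \<le> y \<and> g z = 0"
  proof (cases "g x < 0")
    case True
    then show ?thesis using IVT'[of g x 0 y] assms by (auto simp: mult_less_0_iff)
  next
    case False
    then show ?thesis using IVT2'[of g y 0 x] assms by (auto simp: mult_less_0_iff)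
  qed
  then obtain z where "x \<le> z" "z \<le> y" "g z = 0" by blast
  moreover have "g x \<noteq> 0" "g y \<noteq> 0" using sign by auto
  ultimately show ?thesis by (metis order_less_le)
qed

lemma card_zeros_ge_sign_changes:
  fixes g :: "real \<Rightarrow> real" and P :: "nat \<Rightarrow> real"
  assumes cont: "\<And>x. isCont g x"
    and incr: "\<And>i. i < k \<Longrightarrow> P i < P (Suc i)"
    and alt: "\<And>i. i < k \<Longrightarrow> g (P i) * g (P (Suc i)) < 0"
  shows "\<exists>S. finite S \<and> card S = k \<and> S \<subseteq> {P 0<..<P k} \<and> (\<forall>x\<in>S. g x = 0)"
  using incr alt
proof (induction k)
  case 0
  show ?case by (intro exI[of _ "{}"]) auto
next
  case (Suc k)
  then obtain S where S: "finite S" "card S = k" "S \<subseteq> {P 0<..<P k}" "\<forall>x\<in>S. g x = 0"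
    by force
  have "P 0 \<le> P k"
    by (rule lift_Suc_mono_le_ivl[of "{..<k}"]) (use Suc.prems in \<open>auto intro: less_imp_le\<close>)
  have "continuous_on {P k..P (Suc k)} g"
    using cont by (simp add: continuous_at_imp_continuous_on)
  then obtain x where x: "P k < x" "x < P (Suc k)" "g x = 0"
    using sign_change_imp_zero less_imp_le Suc.prems by (metis lessI)
  have "x \<notin> S" using S(3) x(1) by auto
  then show ?case
    using S x \<open>P 0 \<le> P k\<close> by (intro exI[of _ "insert x S"]) auto
qed

lemma ivt_decreasing_targets:
  fixes f :: "real \<Rightarrow> real" and T :: "nat \<Rightarrow> real"
  assumes cont: "continuous_on {x0..x1} f" and "x0 \<le> x1"
    and decr: "\<And>i. Suc i < n \<Longrightarrow> T (Suc i) < T i"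
    and top: "0 < n \<Longrightarrow> T 0 < f x0" and bot: "\<And>i. i < n \<Longrightarrow> f x1 < T i"
  shows "\<exists>P. (\<forall>i<n. x0 \<le> P i \<and> P i \<le> x1 \<and> f (P i) = T i) \<and> (\<forall>i. Suc i < n \<longrightarrow> P i < P (Suc i))"
proof -
  have "\<exists>P. (\<forall>i<k. x0 \<le> P i \<and> P i \<le> x1 \<and> f (P i) = T i) \<and> (\<forall>i. Suc i < k \<longrightarrow> P i < P (Suc i))"
    if "k \<le> n" for k
    using that
  proof (induction k)
    case 0
    then show ?case by auto
  next
    case (Suc k)
    then obtain P where P: "\<forall>i<k. x0 \<le> P i \<and> P i \<le> x1 \<and> f (P i) = T i"
        "\<forall>i. Suc i < k \<longrightarrow> P i < P (Suc i)"
      by auto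
    define st where "st = (if k = 0 then x0 else P (k - 1))"
    have st: "x0 \<le> st" "st \<le> x1" unfolding st_def using P \<open>x0 \<le> x1\<close> by auto
    have "T k < f st"
    proof (cases "k = 0")
      case False
      then show ?thesis using P decr[of "k - 1"] Suc.prems unfolding st_def by auto
    qed (use top Suc.prems st_def in auto)
    moreover have "continuous_on {st..x1} f"
      by (rule continuous_on_subset[OF cont]) (use st in auto)
    ultimately obtain x where x: "st \<le> x" "x \<le> x1" "f x = T k"
      using IVT2'[of f x1 "T k" st] st bot[of k] Suc.prems by force
    with \<open>T k < f st\<close> have "st < x" by (cases "st = x") auto
    define P' where "P' = P(k := x)"
    have "P' i < P' (Suc i)" if "Suc i < Suc k" for i
      using P \<open>st < x\<close> that unfolding st_def P'_def by (cases "Suc i = k") auto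
    moreover have "x0 \<le> P' i \<and> P' i \<le> x1 \<and> f (P' i) = T i" if "i < Suc k" for i
      using P x st that unfolding P'_def by auto
    ultimately show ?case by blast
  qed
  then show ?thesis by blast
qed

lemma poly_map_poly_of_real:
  "poly (map_poly complex_of_real p) (complex_of_real x) = complex_of_real (poly p x)"
  by (induction p) (auto simp: map_poly_pCons)

lemma complex_roots_eq_real_roots:
  fixes p :: "real poly"
  assumes "p \<noteq> 0" and "degree p \<le> card S" and "finite S" and roots: "\<forall>x\<in>S. poly p x = 0"
  shows "{z. poly (map_poly complex_of_real p) z = 0} = complex_of_real ` S"
proof -
  define A where "A = {z. poly (map_poly complex_of_real p) z = 0}"
  have nonzero: "map_poly complex_of_real p \<noteq> 0"
    using assms(1) by (simp add: map_poly_eq_0_iff)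
  have "finite A" unfolding A_def using poly_roots_finite[OF nonzero] .
  have "card A \<le> degree (map_poly complex_of_real p)"
    unfolding A_def by (rule card_poly_roots_bound[OF nonzero])
  also have "\<dots> \<le> card (complex_of_real ` S)"
    using assms(2) by (simp add: degree_map_poly card_image inj_on_def)
  finally have "card A \<le> card (complex_of_real ` S)" .
  moreover have "complex_of_real ` S \<subseteq> A"
    unfolding A_def using roots by (auto simp: poly_map_poly_of_real)
  ultimately show ?thesis
    using card_seteq[OF \<open>finite A\<close>] unfolding A_def by blast
qed

lemma phase_below_targets:
  fixes m N i :: nat and p :: real
  assumes "3 * N \<le> m + 2" and "i < N" and "\<bar>p - ((real m + 2) * (2*pi/3) - 5*pi/6)\<bar> < pi/3"
  shows "p < (real m + 1/2 - real i) * pi"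
proof -
  have "real (Suc i) \<le> real N" "real (3 * N) \<le> real (m + 2)"
    using assms(1,2) by (simp_all only: of_nat_le_iff Suc_le_eq)
  then have "real m + 1/2 - real i \<ge> (real m + 2) * (2/3) - 1/2" by simp
  then have "(real m + 1/2 - real i) * pi \<ge> ((real m + 2) * (2/3) - 1/2) * pi"
    by (intro mult_right_mono) auto
  moreover have "((real m + 2) * (2/3) - 1/2) * pi = (real m + 2) * (2*pi/3) - 5*pi/6 + pi/3"
    by (simp add: algebra_simps)
  ultimately show ?thesis using assms(3) by linarith
qed

text \<open>With \<open>sa = \<surd>(1 - 3a)\<close>, the substitution \<open>z = zpar l\<close> maps \<open>[lmin, \<infinity>)\<close> decreasingly onto
  \<open>I\<^sub>a\<close>. For \<open>l > lmin\<close> the complex reciprocal roots are \<open>r e\<^sup>\<plusminus>\<^sup>i\<^sup>\<theta>\<close> with \<open>r\<^sup>2 = rsq l\<close>,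
  \<open>\<rho>\<^sup>2 = rhosq l\<close>, \<open>4\<eta>\<^sup>2 = disc l\<close>, and \<open>psi m l\<close> is the phase \<open>(m+2)\<theta> - \<phi>\<close>.\<close>
locale admissible =
  fixes a :: real
  assumes a_ge: "-1 \<le> a" and a_le: "a \<le> 1/3"
begin

definition "sa = sqrt (1 - 3*a)"
definition "lmin = (2 * sa - 1)/3"
definition "zmax = (-2 + 9*a - 2 * sqrt ((1 - 3*a)^3))/27"
definition "zpar l = -l * (l^2 + l + a)"
definition "rsq l = l^2 + l + a"
definition "rhosq l = 3*l^2 + 2*l + a"
definition "disc l = 3*l^2 + 2*l + 4*a - 1"
definition "cos_theta l = -(1 + l)/(2 * sqrt (rsq l))"
definition "cos_phi l = -(1 + 3*l)/(2 * sqrt (rhosq l))"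
definition "theta l = arccos (cos_theta l)"
definition "phi l = arccos (cos_phi l)"
definition "psi m l = (real m + 2) * theta l - phi l"
definition "Hpar m l = poly (H a m) (zpar l)"

lemma sa_nonneg: "0 \<le> sa" and sa_le_2: "sa \<le> 2" and sa_sq: "sa^2 = 1 - 3*a"
proof -
  show "0 \<le> sa" unfolding sa_def using a_le by simp
  then show "sa^2 = 1 - 3*a" unfolding sa_def by simp
  then have "sa^2 \<le> 2^2" using a_ge by simp
  then show "sa \<le> 2" using \<open>0 \<le> sa\<close> by (meson power2_le_imp_le zero_le_numeral)
qed

lemma lmin_ge: "lmin \<ge> -1/3"
  unfolding lmin_def using sa_nonneg by simp

lemma disc_factor: "disc l = (3*l + 1 - 2 * sa) * (3*l + 1 + 2 * sa)/3"
  unfolding disc_def using sa_sq by (simp add: algebra_simps power2_eq_square)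

lemma disc_pos: "l > lmin \<Longrightarrow> disc l > 0"
  unfolding disc_factor using sa_nonneg by (intro divide_pos_pos mult_pos_pos) (auto simp: lmin_def)

lemma disc_nonneg: "l \<ge> lmin \<Longrightarrow> disc l \<ge> 0"
  unfolding disc_factor using sa_nonneg
  by (intro divide_nonneg_pos mult_nonneg_nonneg) (auto simp: lmin_def)

lemma rsq_eq: "4 * rsq l = disc l + (1 + l)^2"
  unfolding rsq_def disc_def by (simp add: algebra_simps power2_eq_square)

lemma rhosq_eq: "4 * rhosq l = disc l + (1 + 3*l)^2"
  unfolding rhosq_def disc_def by (simp add: algebra_simps power2_eq_square)

lemma rsq_pos: "l \<ge> lmin \<Longrightarrow> rsq l > 0"
  using rsq_eq[of l] disc_nonneg[of l] lmin_ge zero_less_power2[of "1 + l"] by linarith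

lemma rhosq_pos: "l > lmin \<Longrightarrow> rhosq l > 0"
  using rhosq_eq[of l] disc_pos[of l] zero_le_power2[of "1 + 3*l"] by linarith

lemma lmin_plus_a_nonneg: "lmin + a \<ge> 0"
proof -
  have "lmin + a = sa * (2 - sa)/3"
    unfolding lmin_def using sa_sq by (simp add: field_simps power2_eq_square)
  moreover have "sa * (2 - sa) \<ge> 0" using sa_nonneg sa_le_2 by simp
  ultimately show ?thesis by simp
qed

lemma cos_theta_bounds: "l \<ge> lmin \<Longrightarrow> -1 \<le> cos_theta l \<and> cos_theta l \<le> 0"
proof -
  assume l: "l \<ge> lmin"
  have pos: "sqrt (rsq l) > 0" "1 + l > 0" using rsq_pos[OF l] lmin_ge l by auto
  have "(1 + l)^2 \<le> (2 * sqrt (rsq l))^2"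
    using rsq_eq[of l] disc_nonneg[OF l] rsq_pos[OF l] by (simp add: power_mult_distrib)
  then have "1 + l \<le> 2 * sqrt (rsq l)" by (rule power2_le_imp_le) (use pos in simp)
  then show ?thesis unfolding cos_theta_def using pos by (simp add: field_simps)
qed

lemma cos_phi_bounds: "l > lmin \<Longrightarrow> -1 < cos_phi l \<and> cos_phi l \<le> 0"
proof -
  assume l: "l > lmin"
  have pos: "sqrt (rhosq l) > 0" "1 + 3*l \<ge> 0" using rhosq_pos[OF l] lmin_ge l by auto
  have "(1 + 3*l)^2 < (2 * sqrt (rhosq l))^2"
    using rhosq_eq[of l] disc_pos[OF l] rhosq_pos[OF l] by (simp add: power_mult_distrib)
  then have "1 + 3*l < 2 * sqrt (rhosq l)" by (rule power2_less_imp_less) (use pos in simp)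
  then show ?thesis unfolding cos_phi_def using pos by (simp add: field_simps)
qed

lemma theta_range: "l \<ge> lmin \<Longrightarrow> pi/2 \<le> theta l \<and> theta l \<le> pi"
  unfolding theta_def using cos_theta_bounds[of l] arccos_le_arccos[of "cos_theta l" 0]
    arccos_bounded[of "cos_theta l"] by simp

lemma phi_range: "l > lmin \<Longrightarrow> 0 \<le> phi l \<and> phi l \<le> pi"
  unfolding phi_def using cos_phi_bounds[of l] arccos_bounded by auto

lemma psi_nonneg:
  assumes "l > lmin" shows "psi m l \<ge> 0"
proof -
  have "(real m + 2) * theta l \<ge> (real m + 2) * (pi/2)"
    using theta_range[of l] assms by (intro mult_left_mono) auto
  moreover have "(real m + 2) * (pi/2) \<ge> pi" by (simp add: field_simps)
  ultimately show ?thesis unfolding psi_def using phi_range[OF assms] by linarith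
qed

lemma Hpar_trig_formula:
  assumes l: "l > lmin"
  shows "Hpar m l = l^(m+2)/rhosq l
    + sqrt (rsq l)^(m+2) * sin (psi m l)/(sqrt (rhosq l) * (sqrt (disc l)/2))"
proof -
  have pos: "rsq l > 0" "rhosq l > 0" "disc l > 0"
    using rsq_pos[of l] rhosq_pos[OF l] disc_pos[OF l] l by auto
  note theta = arccos_polar[OF pos(1) rsq_eq[of l] less_imp_le[OF pos(3)]]
  note phi = arccos_polar[OF pos(2) rhosq_eq[of l] less_imp_le[OF pos(3)]]
  have "poly (H a m) (-l*(l^2 + l + a))
      = l^(m+2)/(sqrt (rhosq l))^2 + sqrt (rsq l)^(m+2) * sin ((real m + 2) * theta l - phi l)
          /(sqrt (rhosq l) * (sqrt (disc l)/2))"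
    by (rule poly_H_trig_formula)
      (use pos theta phi in \<open>simp_all add: rsq_def rhosq_def theta_def phi_def cos_theta_def cos_phi_def\<close>)
  then show ?thesis unfolding Hpar_def zpar_def psi_def using pos by simp
qed

lemma trig_term_dominates:
  assumes l: "l > lmin"
  shows "\<bar>l^(m+2)/rhosq l\<bar> < sqrt (rsq l)^(m+2)/(sqrt (rhosq l) * (sqrt (disc l)/2))"
proof -
  have pos: "rsq l > 0" "rhosq l > 0" "disc l > 0"
    using rsq_pos[of l] rhosq_pos[OF l] disc_pos[OF l] l by auto
  define X Y \<rho> \<eta> where "X = \<bar>l^(m+2)\<bar>" and "Y = sqrt (rsq l)^(m+2)"
    and "\<rho> = sqrt (rhosq l)" and "\<eta> = sqrt (disc l)/2"
  have "\<rho> > 0" "\<eta> > 0" unfolding \<rho>_def \<eta>_def using pos by auto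
  have "\<bar>l\<bar>^2 < (sqrt (rsq l))^2"
    using lmin_plus_a_nonneg l pos(1) unfolding rsq_def by (simp add: power2_eq_square)
  then have "\<bar>l\<bar> < sqrt (rsq l)" by (rule power2_less_imp_less) (use pos in simp)
  then have "X * \<eta> < Y * \<eta>"
    using \<open>\<eta> > 0\<close> unfolding X_def Y_def \<rho>_def \<eta>_def power_abs
    by (intro mult_strict_right_mono power_strict_mono) auto
  also have "disc l/4 \<le> rhosq l" using rhosq_eq[of l] zero_le_power2[of "1 + 3*l"] by linarith
  then have "sqrt (disc l/4) \<le> sqrt (rhosq l)" by simp
  then have "Y * \<eta> \<le> Y * \<rho>"
    using pos unfolding X_def Y_def \<rho>_def \<eta>_def by (intro mult_left_mono) (auto simp: real_sqrt_divide)
  finally have "\<rho> * (X * \<eta>) < \<rho> * (Y * \<rho>)" using \<open>\<rho> > 0\<close> by simp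
  then have "X/(\<rho> * \<rho>) < Y/(\<rho> * \<eta>)"
    using \<open>\<rho> > 0\<close> \<open>\<eta> > 0\<close> by (simp add: divide_simps algebra_simps)
  moreover have "\<bar>l^(m+2)/rhosq l\<bar> = X/(\<rho> * \<rho>)"
    unfolding X_def \<rho>_def using pos by (simp add: abs_divide)
  ultimately show ?thesis by (simp only: Y_def \<rho>_def \<eta>_def)
qed

lemma Hpar_sign_at_phase:
  assumes "l > lmin" and "psi m l = (real j + 1/2) * pi"
  shows "0 < Hpar m l * (-1)^j"
proof -
  have "Hpar m l * (-1)^j = l^(m+2)/rhosq l * (-1)^j
      + sqrt (rsq l)^(m+2)/(sqrt (rhosq l) * (sqrt (disc l)/2))"
    unfolding Hpar_trig_formula[OF assms(1)] assms(2) sin_half_odd_pi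
    by (simp add: algebra_simps flip: power_add mult_2)
  moreover have "\<bar>l^(m+2)/rhosq l * (-1)^j\<bar> = \<bar>l^(m+2)/rhosq l\<bar>" by (simp add: abs_mult)
  ultimately show ?thesis using trig_term_dominates[OF assms(1), of m] by linarith
qed

lemma zpar_strict_decreasing:
  assumes "lmin \<le> u" "u < v" shows "zpar v < zpar u"
proof -
  have "u + v + 2/3 \<ge> 4 * sa/3" using assms unfolding lmin_def by simp
  then have "(4 * sa/3)^2 \<le> (u + v + 2/3)^2" using sa_nonneg by (intro power_mono) auto
  then have "16/9 * sa^2 \<le> (u + v + 2/3)^2" by (simp add: power_mult_distrib power_divide)
  moreover have "u^2 + u * v + v^2 + u + v + a = 3/4*(u + v + 2/3)^2 - sa^2/3 + (u - v)^2/4"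
    using sa_sq by (simp add: power2_eq_square field_simps)
  moreover have "(u - v)^2 > 0" using assms by simp
  ultimately have "u^2 + u * v + v^2 + u + v + a > 0" using zero_le_power2[of sa] by linarith
  moreover have "zpar u - zpar v = (v - u) * (u^2 + u * v + v^2 + u + v + a)"
    unfolding zpar_def by (simp add: power2_eq_square algebra_simps)
  moreover have "v - u > 0" using assms by simp
  ultimately show ?thesis by (metis diff_gt_0_iff_gt mult_pos_pos)
qed

lemma zpar_lmin: "zpar lmin = zmax"
proof -
  have "sqrt ((1 - 3*a)^3) = sa^3" unfolding sa_def by (simp add: real_sqrt_power)
  then show ?thesis using sa_sq unfolding zmax_def zpar_def lmin_def by algebra
qed

lemma isCont_zpar: "isCont zpar x"
  unfolding zpar_def by (intro continuous_intros)

lemma isCont_Hpar: "isCont (Hpar m) x"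
  unfolding Hpar_def by (intro continuous_intros isCont_zpar)

lemma continuous_on_theta: "continuous_on {lmin..} theta"
proof -
  have "continuous_on {lmin..} cos_theta"
    unfolding cos_theta_def rsq_def
  proof (intro continuous_intros ballI)
    show "2 * sqrt (x^2 + x + a) \<noteq> 0" if "x \<in> {lmin..}" for x
      using rsq_pos[of x] that unfolding rsq_def by simp
  qed
  then show ?thesis
    unfolding theta_def using cos_theta_bounds by (intro continuous_on_arccos) fastforce+
qed

lemma continuous_on_psi: "continuous_on {lmin<..} (psi m)"
proof -
  have "continuous_on {lmin<..} cos_phi"
    unfolding cos_phi_def rhosq_def
  proof (intro continuous_intros ballI)
    show "2 * sqrt (3*x^2 + 2*x + a) \<noteq> 0" if "x \<in> {lmin<..}" for x
      using rhosq_pos[of x] that unfolding rhosq_def by simp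
  qed
  then have "continuous_on {lmin<..} phi"
    unfolding phi_def using cos_phi_bounds by (intro continuous_on_arccos) fastforce+
  moreover have "continuous_on {lmin<..} theta"
    by (rule continuous_on_subset[OF continuous_on_theta]) auto
  ultimately show ?thesis unfolding psi_def by (intro continuous_intros)
qed

lemma theta_lmin: "theta lmin = pi"
proof -
  have "3*lmin + 1 - 2 * sa = 0" unfolding lmin_def by (simp add: field_simps)
  then have "disc lmin = 0" unfolding disc_factor by simp
  then have "rsq lmin = ((1 + lmin)/2)^2" using rsq_eq[of lmin] by (simp add: power_divide)
  moreover have "1 + lmin > 0" using lmin_ge by simp
  ultimately have "2 * sqrt (rsq lmin) = 1 + lmin" by simp
  then have "cos_theta lmin = -1"
    unfolding cos_theta_def using \<open>1 + lmin > 0\<close> by (simp add: divide_eq_minus_1_iff)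
  then show ?thesis unfolding theta_def by simp
qed

lemma theta_strict_decreasing:
  assumes u: "lmin \<le> u" and uv: "u < v" shows "theta v < theta u"
proof -
  txt \<open>It suffices that \<open>(1 + l)\<^sup>2 / rsq l\<close>, i.e. \<open>4 cos\<^sup>2 \<theta>\<close>, is increasing.\<close>
  define U V where "U = 1 + u" and "V = 1 + v"
  have v: "lmin \<le> v" using u uv by simp
  have UV_pos: "U > 0" "V > 0" using u v lmin_ge unfolding U_def V_def by auto
  define c where "c = (1 + sa)^2/3"
  have "1 + lmin - a = c" unfolding c_def lmin_def using sa_sq by (simp add: power2_eq_square field_simps)
  then have Ua: "U - a \<ge> c" "V - a > c" using u uv unfolding U_def V_def by auto
  have c_pos: "c > 0" unfolding c_def using sa_nonneg by simp
  have "3 * c = 1 + 2 * sa + sa^2" unfolding c_def by (simp add: power2_eq_square algebra_simps)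
  then have "\<bar>a\<bar> \<le> c" using sa_sq sa_nonneg zero_le_power2[of sa] by (simp add: abs_le_iff)
  then have "a^2 \<le> c^2" using power_mono[of "\<bar>a\<bar>" c 2] by simp
  moreover have "(U - a) * (V - a) \<ge> c * (V - a)" using Ua c_pos by (intro mult_right_mono) auto
  moreover have "c * (V - a) > c * c" using Ua c_pos by simp
  ultimately have UV: "U*V - a*(U + V) > 0" by (simp add: power2_eq_square algebra_simps)
  have "U^2 * rsq v - V^2 * rsq u = (V - U) * (U*V - a*(U + V))"
    unfolding rsq_def U_def V_def by (simp add: power2_eq_square algebra_simps)
  moreover have "(V - U) * (U*V - a*(U + V)) > 0" using UV uv unfolding U_def V_def by simp
  ultimately have "V^2/rsq v < U^2/rsq u" using rsq_pos[OF u] rsq_pos[OF v] by (simp add: divide_simps)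
  then have "sqrt (V^2/rsq v) < sqrt (U^2/rsq u)" by simp
  then have "V/sqrt (rsq v) < U/sqrt (rsq u)" using UV_pos by (simp add: real_sqrt_divide)
  then have "cos_theta u < cos_theta v"
    unfolding cos_theta_def U_def V_def using rsq_pos[OF u] rsq_pos[OF v] by (simp add: field_simps)
  then show ?thesis
    unfolding theta_def using cos_theta_bounds[OF u] cos_theta_bounds[OF v]
    by (intro arccos_less_arccos) auto
qed

lemma psi_limit: "(psi m \<longlongrightarrow> (real m + 2) * (2*pi/3) - 5*pi/6) at_top"
proof -
  have sqrt3: "0 \<le> sqrt 3" "sqrt 3 < (2::real)"
    using real_less_lsqrt[of 2 3] by auto
  have cos_theta_lim: "(cos_theta \<longlongrightarrow> -(1/2)) at_top"
    unfolding cos_theta_def rsq_def by real_asymp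
  have "arccos (-(1/2)) = 2*pi/3"
    using arccos_minus[of "1/2"] arccos_cos[of "pi/3"] by simp
  moreover have "(theta \<longlongrightarrow> arccos (-(1/2))) at_top"
    unfolding theta_def[abs_def] by (rule isCont_tendsto_compose[OF isCont_arccos cos_theta_lim]) auto
  ultimately have theta_lim: "(theta \<longlongrightarrow> 2*pi/3) at_top" by simp
  have "(cos_phi \<longlongrightarrow> -(3 * inverse (3 powr (1/2)) / 2)) at_top"
    unfolding cos_phi_def rhosq_def by real_asymp
  moreover have "3 * inverse (3 powr (1/2)) / 2 = sqrt 3/(2::real)"
    using real_sqrt_mult_self[of 3] by (simp add: powr_half_sqrt field_simps)
  ultimately have cos_phi_lim: "(cos_phi \<longlongrightarrow> -(sqrt 3/2)) at_top" by simp
  have phi_limit: "arccos (-(sqrt 3/2)) = 5*pi/6"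
    using arccos_minus[of "sqrt 3/2"] arccos_cos[of "pi/6"] cos_30 sqrt3 by simp
  have "(phi \<longlongrightarrow> arccos (-(sqrt 3/2))) at_top"
    unfolding phi_def[abs_def]
    by (rule isCont_tendsto_compose[OF isCont_arccos cos_phi_lim]) (use sqrt3 in linarith)+
  then have phi_lim: "(phi \<longlongrightarrow> 5*pi/6) at_top" unfolding phi_limit .
  show ?thesis
    unfolding psi_def[abs_def] by (intro tendsto_intros theta_lim phi_lim)
qed

lemma psi_near_lmin: "\<exists>l>lmin. (real m + 1/2) * pi < psi m l"
proof -
  define e where "e = pi/(2*(real m + 2))"
  have "e > 0" unfolding e_def by simp
  then obtain d where d: "d > 0" "\<And>l. l \<in> {lmin..} \<Longrightarrow> dist l lmin < d \<Longrightarrow> dist (theta l) pi < e"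
    using continuous_on_theta unfolding continuous_on_iff theta_lmin[symmetric] by fastforce
  define l where "l = lmin + d/2"
  have l: "l > lmin" "dist l lmin < d" unfolding l_def using d by (auto simp: dist_real_def)
  then have "\<bar>theta l - pi\<bar> < e" using d(2)[of l] by (simp add: dist_real_def)
  then have "theta l > pi - e" by linarith
  then have "(real m + 2) * theta l > (real m + 2) * (pi - e)" by (intro mult_strict_left_mono) auto
  moreover have "(real m + 2) * (pi - e) = (real m + 3/2) * pi" unfolding e_def by (simp add: field_simps)
  ultimately have "psi m l > (real m + 1/2) * pi"
    using phi_range[OF l(1)] unfolding psi_def by (simp add: algebra_simps)
  then show ?thesis using l by blast
qed

lemma psi_near_limit:
  fixes l0 :: real
  obtains l where "l > l0" and "l > 0" and "\<bar>psi m l - ((real m + 2) * (2*pi/3) - 5*pi/6)\<bar> < pi/3"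
proof -
  have "\<forall>\<^sub>F l in at_top. \<bar>psi m l - ((real m + 2) * (2*pi/3) - 5*pi/6)\<bar> < pi/3"
    using tendstoD[OF psi_limit[of m], of "pi/3"] by (simp add: dist_real_def)
  moreover have "\<forall>\<^sub>F l in at_top. l > max l0 0" by (rule eventually_gt_at_top)
  ultimately have "\<forall>\<^sub>F l in at_top. \<bar>psi m l - ((real m + 2) * (2*pi/3) - 5*pi/6)\<bar> < pi/3 \<and> l > max l0 0"
    by (rule eventually_conj)
  then show ?thesis using that eventually_happens'[OF trivial_limit_at_top_linorder] by auto
qed

lemma Hpar_pos_far:
  assumes "m = 3 * k" and "l > lmin" and "l > 0"
    and "\<bar>psi m l - ((real m + 2) * (2*pi/3) - 5*pi/6)\<bar> < pi/3"
  shows "Hpar m l > 0"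
proof -
  define y where "y = psi m l - real k * (2*pi)"
  have "(real m + 2) * (2*pi/3) - 5*pi/6 = real k * (2*pi) + pi/2"
    unfolding assms(1) by (simp add: field_simps)
  then have "0 < y" "y < pi" using assms(4) pi_gt_zero unfolding y_def by linarith+
  moreover have "sin (psi m l) = sin y"
    unfolding y_def by (metis mult.commute sin_cos_eq_iff of_int_of_nat_eq diff_add_cancel)
  ultimately have "sin (psi m l) > 0" using sin_gt_zero by simp
  then show ?thesis
    unfolding Hpar_trig_formula[OF assms(2)]
    using assms(2,3) rsq_pos[of l] rhosq_pos[of l] disc_pos[of l]
    by (intro add_pos_pos divide_pos_pos mult_pos_pos) auto
qed

lemma sign_alternation:
  obtains P where "\<And>i. i \<le> m div 3 \<Longrightarrow> lmin < P i \<and> 0 < Hpar m (P i) * (-1)^(m - i)"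
    and "\<And>i. i < m div 3 \<Longrightarrow> P i < P (Suc i)"
proof -
  define k N where "k = m div 3" and "N = (m + 2) div 3"
  have N_cases: "N = Suc k \<or> (N = k \<and> m = 3 * k)" and "3 * N \<le> m + 2" and "N \<le> m + 1"
    unfolding k_def N_def by presburger+
  obtain l1 where l1: "l1 > lmin" "(real m + 1/2) * pi < psi m l1"
    using psi_near_lmin by blast
  define L where "L = (real m + 2) * (2*pi/3) - 5*pi/6"
  obtain l2 where l2: "l2 > l1" "l2 > 0" "\<bar>psi m l2 - L\<bar> < pi/3"
    using psi_near_limit unfolding L_def by blast
  define T where "T i = (real m + 1/2 - real i) * pi" for i
  have below: "psi m l2 < T i" if "i < N" for i
    using phase_below_targets[OF \<open>3 * N \<le> m + 2\<close> that] l2(3) unfolding T_def L_def .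
  have "continuous_on {l1..l2} (psi m)"
    by (rule continuous_on_subset[OF continuous_on_psi]) (use l1 in auto)
  then obtain Q where Q: "\<forall>i<N. l1 \<le> Q i \<and> Q i \<le> l2 \<and> psi m (Q i) = T i"
      "\<forall>i. Suc i < N \<longrightarrow> Q i < Q (Suc i)"
    using ivt_decreasing_targets[of l1 l2 "psi m" N T] l1 l2 below by (auto simp: T_def algebra_simps)
  text \<open>If \<open>3 dvd m\<close>, there is one target fewer than needed; the last sign is then read off at
    \<open>l2\<close>, where the phase is close to \<open>2k\<pi> + \<pi>/2\<close>.\<close>
  define P where "P i = (if i < N then Q i else l2)" for i
  show ?thesis
  proof
    fix i assume "i \<le> m div 3"
    show "lmin < P i \<and> 0 < Hpar m (P i) * (-1)^(m - i)"
    proof (cases "i < N")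
      case True
      then have "psi m (Q i) = (real (m - i) + 1/2) * pi"
        using Q \<open>N \<le> m + 1\<close> by (simp add: T_def of_nat_diff)
      then show ?thesis
        using Hpar_sign_at_phase[of "Q i"] Q True l1 unfolding P_def by force
    next
      case False
      then have "N = k" "m = 3 * k" "i = k" using N_cases \<open>i \<le> m div 3\<close> k_def N_def by auto
      then have "(-1::real)^(m - i) = 1" by (simp add: mult_2[symmetric])
      then show ?thesis
        using Hpar_pos_far[OF \<open>m = 3 * k\<close>, of l2] False l1 l2 unfolding P_def L_def by simp
    qed
  next
    fix i assume "i < m div 3"
    show "P i < P (Suc i)"
    proof (cases "Suc i < N")
      case False
      then have "Suc i = N" using N_cases \<open>i < m div 3\<close> k_def N_def by auto
      then have "Q i \<le> l2" "psi m (Q i) \<noteq> psi m l2" using Q below[of i] by auto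
      then show ?thesis using False \<open>Suc i = N\<close> unfolding P_def by force
    qed (use Q in \<open>auto simp: P_def\<close>)
  qed
qed

lemma H_nonzero_and_zeros_below:
  shows H_nonzero: "H a m \<noteq> 0" and Hzeros_below: "Hzeros a m \<subseteq> complex_of_real ` {..<zmax}"
proof -
  define k where "k = m div 3"
  obtain P where sign: "\<And>i. i \<le> k \<Longrightarrow> lmin < P i \<and> 0 < Hpar m (P i) * (-1)^(m - i)"
    and incr: "\<And>i. i < k \<Longrightarrow> P i < P (Suc i)"
    using sign_alternation unfolding k_def by metis
  have "Hpar m (P i) * Hpar m (P (Suc i)) < 0" if "i < k" for i
  proof (rule mult_neg_of_alternating_signs)
    have "m - i = Suc (m - Suc i)" using that unfolding k_def by linarith
    then show "0 < Hpar m (P i) * (-1)^Suc (m - Suc i)" using sign[of i] that by simp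
    show "0 < Hpar m (P (Suc i)) * (-1)^(m - Suc i)" using sign[of "Suc i"] that by simp
  qed
  then obtain S where S: "finite S" "card S = k" "S \<subseteq> {P 0<..<P k}" "\<forall>x\<in>S. Hpar m x = 0"
    using card_zeros_ge_sign_changes[of "Hpar m" k P] isCont_Hpar incr by blast
  have S_lmin: "S \<subseteq> {lmin<..}" using S(3) sign[of 0] by force
  show "H a m \<noteq> 0"
    using sign[of 0] unfolding Hpar_def by auto
  have "inj_on zpar S"
  proof (rule linorder_inj_onI')
    fix x y assume "x \<in> S" "y \<in> S" "x < y"
    then show "zpar x \<noteq> zpar y" using S_lmin zpar_strict_decreasing[of x y] by force
  qed
  then have "Hzeros a m = complex_of_real ` zpar ` S"
    unfolding Hzeros_def
    using \<open>H a m \<noteq> 0\<close> degree_H_le[of a m] S unfolding Hpar_def k_def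
    by (intro complex_roots_eq_real_roots) (auto simp: card_image)
  moreover have "zpar ` S \<subseteq> {..<zmax}"
    using S_lmin zpar_strict_decreasing[of lmin] zpar_lmin by force
  ultimately show "Hzeros a m \<subseteq> complex_of_real ` {..<zmax}" by blast
qed

lemma phase_gap:
  assumes "lmin < u" and "u < v"
  obtains m where "psi m v + 3*pi < psi m u"
proof -
  have gap: "theta u - theta v > 0" using theta_strict_decreasing assms by simp
  obtain n :: nat where "4*pi/(theta u - theta v) < real n" using reals_Archimedean2 by blast
  then have "4*pi < (real n + 2) * (theta u - theta v)"
    using gap by (simp add: field_simps)
  moreover have "psi n u - psi n v = (real n + 2) * (theta u - theta v) - (phi u - phi v)"
    unfolding psi_def by (simp add: algebra_simps)
  ultimately show ?thesis
    using that[of n] phi_range[of u] phi_range[of v] assms by auto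
qed

lemma zero_between:
  assumes "lmin < u" and "u < v"
  shows "\<exists>m w. u < w \<and> w < v \<and> Hpar m w = 0"
proof -
  obtain m where gap: "psi m v + 3*pi < psi m u" using phase_gap assms .
  define j where "j = nat \<lceil>psi m v / pi\<rceil>"
  have "real j \<ge> psi m v / pi" "real j < psi m v / pi + 1"
    using psi_nonneg[of v m] assms unfolding j_def by (simp_all add: ceiling_correct) linarith
  then have j_bounds: "psi m v \<le> real j * pi" "real j * pi < psi m v + pi"
    by (simp_all add: field_simps)
  define T1 T2 where "T1 = (real j + 1/2) * pi" and "T2 = (real (Suc j) + 1/2) * pi"
  have targets: "psi m v < T1" "T1 < T2" "T2 < psi m u"
    using gap j_bounds unfolding T1_def T2_def by (simp_all add: algebra_simps)
  have cont: "continuous_on {u..v} (psi m)"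
    by (rule continuous_on_subset[OF continuous_on_psi]) (use assms in auto)
  obtain w1 where w1: "u \<le> w1" "w1 \<le> v" "psi m w1 = T1"
    using IVT2'[OF _ _ _ cont, of T1] targets assms by auto
  obtain w2 where w2: "u \<le> w2" "w2 \<le> v" "psi m w2 = T2"
    using IVT2'[OF _ _ _ cont, of T2] targets assms by auto
  have "Hpar m w2 * Hpar m w1 < 0"
    using Hpar_sign_at_phase[of w1 m j] Hpar_sign_at_phase[of w2 m "Suc j"] w1 w2 assms
    unfolding T1_def T2_def by (intro mult_neg_of_alternating_signs) auto
  then have "Hpar m (min w1 w2) * Hpar m (max w1 w2) < 0"
    by (cases "w1 \<le> w2") (auto simp: min_def max_def mult.commute)
  moreover have "continuous_on {min w1 w2..max w1 w2} (Hpar m)"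
    using isCont_Hpar by (simp add: continuous_at_imp_continuous_on)
  moreover have "min w1 w2 \<le> max w1 w2" by (simp add: le_max_iff_disj)
  ultimately obtain w where "min w1 w2 < w" "w < max w1 w2" "Hpar m w = 0"
    using sign_change_imp_zero by blast
  then show ?thesis using w1 w2 by (intro exI[of _ m] exI[of _ w]) auto
qed

lemma zpar_onto: "x < zmax \<Longrightarrow> \<exists>l>lmin. zpar l = x"
proof -
  assume x: "x < zmax"
  have "filterlim zpar at_bot at_top" unfolding zpar_def by real_asymp
  then have "\<forall>\<^sub>F l in at_top. l \<ge> lmin \<and> zpar l < x"
    unfolding filterlim_at_bot_dense by (intro eventually_conj eventually_ge_at_top) blast
  then obtain L where L: "L \<ge> lmin" "zpar L < x"
    using eventually_happens'[OF trivial_limit_at_top_linorder] by blast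
  then obtain l where l: "lmin \<le> l" "zpar l = x"
    using IVT2'[of zpar L x lmin] x zpar_lmin isCont_zpar
    by (auto intro: continuous_at_imp_continuous_on)
  moreover have "l \<noteq> lmin" using l x zpar_lmin by auto
  ultimately show ?thesis by force
qed

lemma real_zeros_dense: "{..<zmax} \<subseteq> closure (\<Union>m. {x. poly (H a m) x = 0})"
proof
  fix x assume "x \<in> {..<zmax}"
  then obtain l0 where l0: "l0 > lmin" "zpar l0 = x" using zpar_onto by auto
  show "x \<in> closure (\<Union>m. {x. poly (H a m) x = 0})"
    unfolding closure_approachable
  proof (intro allI impI)
    fix e :: real assume "e > 0"
    then obtain d where d: "d > 0" "\<And>l. dist l l0 < d \<Longrightarrow> dist (zpar l) x < e"
      using isCont_zpar[of l0] l0(2) unfolding continuous_at_eps_delta by blast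
    define \<delta> where "\<delta> = min d (l0 - lmin) / 2"
    have \<delta>: "0 < \<delta>" "\<delta> < d" "\<delta> < l0 - lmin" unfolding \<delta>_def using d l0 by auto
    then obtain m w where w: "l0 - \<delta> < w" "w < l0 + \<delta>" "Hpar m w = 0"
      using zero_between[of "l0 - \<delta>" "l0 + \<delta>"] by auto
    then have "dist (zpar w) x < e" using d(2) \<delta> by (simp add: dist_real_def)
    moreover have "zpar w \<in> (\<Union>m. {x. poly (H a m) x = 0})" using w(3) unfolding Hpar_def by auto
    ultimately show "\<exists>y\<in>(\<Union>m. {x. poly (H a m) x = 0}). dist y x < e" by blast
  qed
qed

end

theorem theorem2p1:
  fixes a :: real
  assumes "-1 \<le> a" and "a \<le> 1/3"
  shows "(\<forall>m. H a m \<noteq> 0 \<longrightarrow> Hzeros a m \<subseteq> complex_of_real ` Ia a)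
       \<and> Ia a \<subseteq> closure (\<Union>m \<in> {m. H a m \<noteq> 0}. {x::real. complex_of_real x \<in> Hzeros a m})"
proof -
  interpret admissible a using assms by unfold_locales
  have Ia: "Ia a = {..zmax}" unfolding Ia_def zmax_def by simp
  have real_zeros: "(\<Union>m \<in> {m. H a m \<noteq> 0}. {x. complex_of_real x \<in> Hzeros a m})
      = (\<Union>m. {x. poly (H a m) x = 0})"
    using H_nonzero unfolding Hzeros_def by (simp add: poly_map_poly_of_real)
  have "closure {..<zmax} \<subseteq> closure (\<Union>m. {x. poly (H a m) x = 0})"
    using real_zeros_dense by (rule closure_minimal) simp
  then have "Ia a \<subseteq> closure (\<Union>m \<in> {m. H a m \<noteq> 0}. {x. complex_of_real x \<in> Hzeros a m})"
    unfolding Ia real_zeros by simp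
  moreover have "Hzeros a m \<subseteq> complex_of_real ` Ia a" for m
    using Hzeros_below[of m] unfolding Ia by auto
  ultimately show ?thesis by blast
qed

end
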